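(* For $\alpha\in\mathbb{K}^\times$ let $A_{2,\alpha}$ be the evolution algebra over the field $\mathbb{K}$ with natural basis $\{e_1,e_2\}$ such that $e_1^2=e_2$ and $e_2^2=\alpha e_1$. For $\alpha,\alpha'\in\mathbb{K}^\times$, $A_{2,\alpha}$ is isomorphic to $A_{2,\alpha'}$ as a $\mathbb{K}$-algebra if and only if $\overline\alpha=\overline{\alpha'}$ or $\overline\alpha=\overline{\alpha'}^2$, where classes are taken in $G_3=\mathbb{K}^\times/(\mathbb{K}^\times)^3$.
   Context: An evolution algebra over $\mathbb{K}$ is a $\mathbb{K}$-algebra with a basis $\{e_i\}$ (natural basis) such that $e_ie_j=0$ for $i\neq j$. $\overline\rho$ denotes the class of $\rho\in\mathbb{K}^\times$ in $G_3$. *)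

theory Defs
  imports Main
begin

text \<open>The 2-dimensional evolution algebra A_{2,alpha}, realised on K x K with
  e1 = (1,0), e2 = (0,1): e1 e1 = e2, e2 e2 = alpha e1, e1 e2 = e2 e1 = 0,
  extended bilinearly.\<close>
definition evo_mult :: "'a::field \<Rightarrow> 'a \<times> 'a \<Rightarrow> 'a \<times> 'a \<Rightarrow> 'a \<times> 'a" where
  "evo_mult \<alpha> u v = (\<alpha> * snd u * snd v, fst u * fst v)"

definition klinear :: "('a::field \<times> 'a \<Rightarrow> 'a \<times> 'a) \<Rightarrow> bool" where
  "klinear f \<longleftrightarrow> (\<forall>u v. f (fst u + fst v, snd u + snd v) =
                       (fst (f u) + fst (f v), snd (f u) + snd (f v))) \<and>
                   (\<forall>c u. f (c * fst u, c * snd u) = (c * fst (f u), c * snd (f u)))"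

definition evo_iso :: "'a::field \<Rightarrow> 'a \<Rightarrow> bool" where
  "evo_iso \<alpha> \<alpha>' \<longleftrightarrow> (\<exists>f. bij f \<and> klinear f \<and>
      (\<forall>u v. f (evo_mult \<alpha> u v) = evo_mult \<alpha>' (f u) (f v)))"

definition same_class3 :: "'a::field \<Rightarrow> 'a \<Rightarrow> bool" where
  "same_class3 a b \<longleftrightarrow> (\<exists>c. c \<noteq> 0 \<and> a = b * c ^ 3)"

end

theory Submission
  imports Defs
begin

text \<open>Write f(e1) = (a, b) for an isomorphism f. Then f(e2) = f(e1)^2 = (alpha' b^2, a^2),
  hence alpha (a, b) = f(e2^2) = f(e2)^2 = (alpha' a^4, alpha'^2 b^4); since (a, b) \<noteq> 0 this
  gives alpha = alpha' a^3 or alpha = alpha'^2 b^3. Conversely, the diagonal map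
  e1 \<mapsto> c e1, e2 \<mapsto> c^2 e2 and the anti-diagonal map e1 \<mapsto> c e2, e2 \<mapsto> alpha' c^2 e1
  realise these two cases.\<close>

definition mat2_map :: "'a::field \<Rightarrow> 'a \<Rightarrow> 'a \<Rightarrow> 'a \<Rightarrow> 'a \<times> 'a \<Rightarrow> 'a \<times> 'a" where
  "mat2_map p q r s = (\<lambda>(x, y). (p * x + q * y, r * x + s * y))"

lemma klinear_mat2_map: "klinear (mat2_map p q r s)"
  unfolding klinear_def mat2_map_def by (auto simp: algebra_simps)

lemma bij_mat2_map:
  assumes "p * s - q * r \<noteq> 0"
  shows "bij (mat2_map p q r s)"
proof (rule bij_betw_byWitness)
  define i where "i = inverse (p * s - q * r)"
  have i: "i * (p * s - q * r) = 1"
    using assms unfolding i_def by simp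
  let ?g = "mat2_map (s * i) (- q * i) (- r * i) (p * i)"
  have "?g (mat2_map p q r s (x, y)) = (i * (p * s - q * r) * x, i * (p * s - q * r) * y)"
    and "mat2_map p q r s (?g (x, y)) = (i * (p * s - q * r) * x, i * (p * s - q * r) * y)" for x y
    by (simp_all add: mat2_map_def algebra_simps)
  then show "\<forall>u\<in>UNIV. ?g (mat2_map p q r s u) = u" "\<forall>u\<in>UNIV. mat2_map p q r s (?g u) = u"
    unfolding i by auto
qed simp_all

lemma evo_iso_by_mat2_map:
  assumes "p * s - q * r \<noteq> 0"
    and "\<And>u v. mat2_map p q r s (evo_mult \<alpha> u v) = evo_mult \<alpha>' (mat2_map p q r s u) (mat2_map p q r s v)"
  shows "evo_iso \<alpha> \<alpha>'"
  unfolding evo_iso_def using bij_mat2_map[OF assms(1)] klinear_mat2_map assms(2) by blast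

lemma evo_iso_cube_multiple:
  fixes \<alpha>' c :: "'a::field"
  assumes "c \<noteq> 0"
  shows "evo_iso (\<alpha>' * c ^ 3) \<alpha>'"
  by (rule evo_iso_by_mat2_map[where p = c and q = 0 and r = 0 and s = "c ^ 2"])
    (auto simp: assms mat2_map_def evo_mult_def power2_eq_square power3_eq_cube algebra_simps)

lemma evo_iso_square_cube_multiple:
  fixes \<alpha>' c :: "'a::field"
  assumes "c \<noteq> 0" and "\<alpha>' \<noteq> 0"
  shows "evo_iso (\<alpha>' ^ 2 * c ^ 3) \<alpha>'"
  by (rule evo_iso_by_mat2_map[where p = 0 and q = "\<alpha>' * c ^ 2" and r = c and s = 0])
    (auto simp: assms mat2_map_def evo_mult_def power2_eq_square power3_eq_cube algebra_simps)

lemma klinear_smult_e1: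
  assumes "klinear f"
  shows "f (x, 0) = (x * fst (f (1, 0)), x * snd (f (1, 0)))"
  using assms[unfolded klinear_def] by (metis fst_conv snd_conv mult_1_right mult_zero_right)

lemma evo_hom_image_e1:
  fixes \<alpha> \<alpha>' :: "'a::field"
  assumes "klinear f"
    and hom: "\<And>u v. f (evo_mult \<alpha> u v) = evo_mult \<alpha>' (f u) (f v)"
    and e1: "f (1, 0) = (a, b)"
  shows "\<alpha> * a = \<alpha>' * a ^ 4" and "\<alpha> * b = \<alpha>' ^ 2 * b ^ 4"
proof -
  have e2: "f (0, 1) = (\<alpha>' * b ^ 2, a ^ 2)"
    using hom[of "(1, 0)" "(1, 0)"] e1 by (simp add: evo_mult_def power2_eq_square)
  have "f (\<alpha>, 0) = evo_mult \<alpha>' (f (0, 1)) (f (0, 1))"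
    using hom[of "(0, 1)" "(0, 1)"] by (simp add: evo_mult_def)
  then have "(\<alpha> * a, \<alpha> * b) = (\<alpha>' * a ^ 4, \<alpha>' ^ 2 * b ^ 4)"
    using klinear_smult_e1[OF assms(1), of \<alpha>] e1 e2
    by (simp add: evo_mult_def power2_eq_square power4_eq_xxxx algebra_simps)
  then show "\<alpha> * a = \<alpha>' * a ^ 4" and "\<alpha> * b = \<alpha>' ^ 2 * b ^ 4" by simp_all
qed

lemma evo_iso_imp_same_class3:
  fixes \<alpha> \<alpha>' :: "'a::field"
  assumes "evo_iso \<alpha> \<alpha>'"
  shows "same_class3 \<alpha> \<alpha>' \<or> same_class3 \<alpha> (\<alpha>' ^ 2)"
proof -
  obtain f where "bij f" and lin: "klinear f"
    and hom: "\<And>u v. f (evo_mult \<alpha> u v) = evo_mult \<alpha>' (f u) (f v)"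
    using assms unfolding evo_iso_def by blast
  obtain a b where e1: "f (1, 0) = (a, b)" by fastforce
  have "f (1, 0) \<noteq> f (0, 0)"
    using \<open>bij f\<close> by (simp add: bij_is_inj inj_eq)
  then have e1_nonzero: "a \<noteq> 0 \<or> b \<noteq> 0"
    using klinear_smult_e1[OF lin, of 0] e1 by auto
  note image = evo_hom_image_e1[OF lin hom e1]
  show ?thesis
  proof (cases "b = 0")
    case True
    with e1_nonzero have "a \<noteq> 0" by simp
    moreover from image(1) have "\<alpha> * a = (\<alpha>' * a ^ 3) * a"
      by (simp add: power4_eq_xxxx power3_eq_cube ac_simps)
    ultimately have "\<alpha> = \<alpha>' * a ^ 3" by simp
    with \<open>a \<noteq> 0\<close> show ?thesis unfolding same_class3_def by blast
  next
    case False
    from image(2) have "\<alpha> * b = (\<alpha>' ^ 2 * b ^ 3) * b"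
      by (simp add: power4_eq_xxxx power3_eq_cube ac_simps)
    with False have "\<alpha> = \<alpha>' ^ 2 * b ^ 3" by simp
    with False show ?thesis unfolding same_class3_def by blast
  qed
qed

theorem lemma3p3:
  fixes \<alpha> \<alpha>' :: "'a::field"
  assumes "\<alpha> \<noteq> 0" and "\<alpha>' \<noteq> 0"
  shows "evo_iso \<alpha> \<alpha>' \<longleftrightarrow> (same_class3 \<alpha> \<alpha>' \<or> same_class3 \<alpha> (\<alpha>' ^ 2))"
proof
  assume "evo_iso \<alpha> \<alpha>'"
  then show "same_class3 \<alpha> \<alpha>' \<or> same_class3 \<alpha> (\<alpha>' ^ 2)"
    by (rule evo_iso_imp_same_class3)
next
  assume "same_class3 \<alpha> \<alpha>' \<or> same_class3 \<alpha> (\<alpha>' ^ 2)"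
  then show "evo_iso \<alpha> \<alpha>'"
    unfolding same_class3_def
    using evo_iso_cube_multiple evo_iso_square_cube_multiple assms(2) by blast
qed

end
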